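(* Let $\tilde s\in\mathbb N_0^d$ and $\tilde T\in\mathcal A(\tilde s)$. Then for each $i=1,\dots,d$ and every $t\in\mathbb N_0$, $T_i(t)$ is an $\mathbf F^i$-stopping time.
   Context: $(\Omega,\mathcal F,\mathbb P)$ complete; $\{\mathcal F(\tilde s)\}_{\tilde s\in\mathbb N_0^d}$ satisfies (F1) monotonicity in the componentwise order, (F2) $\mathcal F(\tilde 0)$ contains all null sets, (F4) $\mathcal F(\tilde s),\mathcal F(\tilde r)$ conditionally independent given $\mathcal F(\tilde s\wedge\tilde r)$ for all $\tilde s,\tilde r$. $\mathcal F^i(t):=\sigma\big(\bigcup_{\tilde r:\,r_i\le t}\mathcal F(\tilde r)\big)$, $\mathbf F^i=\{\mathcal F^i(t)\}_{t\in\mathbb N_0}$. An allocation strategy for $\tilde s$ is an $\mathbb N_0^d$-valued $\{\tilde T(t)\}_{t\in\mathbb N_0}$ with $\tilde T(0)=\tilde s$, $\tilde T(t+1)=\tilde T(t)+\tilde e_j$ for some $j$ ($\tilde e_j$ unit vectors), and $\{\tilde T(t+1)=\tilde T(t)+\tilde e_j,\ \tilde T(t)=\tilde r\}\in\mathcal F(\tilde r)$ for all $j,\tilde r$; $\mathcal A(\tilde s)$ is the set of these. *)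

theory Defs
  imports "HOL-Probability.Probability"
begin

text \<open>Multi-indices in N_0^d are functions from a finite index type 'd to nat;
  the componentwise order is the pointwise order on functions, and the
  componentwise minimum is inf.\<close>

definition unit_vec :: "'d \<Rightarrow> ('d \<Rightarrow> nat)" where
  "unit_vec j = (\<lambda>k. if k = j then 1 else 0)"

definition cond_indep :: "'a measure \<Rightarrow> 'a measure \<Rightarrow> 'a measure \<Rightarrow> 'a measure \<Rightarrow> bool" where
  "cond_indep M G H K \<longleftrightarrow>
     (\<forall>A\<in>sets G. \<forall>B\<in>sets H.
        AE x in M. real_cond_exp M K (indicator (A \<inter> B)) x
                   = real_cond_exp M K (indicator A) x * real_cond_exp M K (indicator B) x)"

text \<open>Multiparameter filtration satisfying (F1), (F2), (F4).\<close>
definition multi_filtration :: "'a measure \<Rightarrow> (('d \<Rightarrow> nat) \<Rightarrow> 'a measure) \<Rightarrow> bool" where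
  "multi_filtration M F \<longleftrightarrow>
     (\<forall>s. subalgebra M (F s)) \<and>
     (\<forall>s r. s \<le> r \<longrightarrow> sets (F s) \<subseteq> sets (F r)) \<and>
     null_sets M \<subseteq> sets (F (\<lambda>_. 0)) \<and>
     (\<forall>s r. cond_indep M (F s) (F r) (F (inf s r)))"

definition coord_filtration ::
  "'a measure \<Rightarrow> (('d \<Rightarrow> nat) \<Rightarrow> 'a measure) \<Rightarrow> 'd \<Rightarrow> nat \<Rightarrow> 'a measure" where
  "coord_filtration M F i t = sigma (space M) (\<Union>r\<in>{r. r i \<le> t}. sets (F r))"

definition allocation_strategy ::
  "'a measure \<Rightarrow> (('d \<Rightarrow> nat) \<Rightarrow> 'a measure) \<Rightarrow> ('d \<Rightarrow> nat) \<Rightarrow> (nat \<Rightarrow> 'a \<Rightarrow> ('d \<Rightarrow> nat)) \<Rightarrow> bool" where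
  "allocation_strategy M F s T \<longleftrightarrow>
     (\<forall>\<omega>\<in>space M. T 0 \<omega> = s) \<and>
     (\<forall>t. \<forall>\<omega>\<in>space M. \<exists>j. T (Suc t) \<omega> = (\<lambda>k. T t \<omega> k + unit_vec j k)) \<and>
     (\<forall>t j r. {\<omega>\<in>space M. T (Suc t) \<omega> = (\<lambda>k. T t \<omega> k + unit_vec j k) \<and> T t \<omega> = r} \<in> sets (F r))"

end

theory Submission
  imports Defs
begin

text \<open>Whether coordinate i of T(t+1) is at most u is decided by the value r of T(t) and the
  direction j of the next step; the event that the strategy is at r and steps in direction j
  lies in F(r), which is contained in F^i(u) as soon as r_i \<le> u. Hence {T_i(t+1) \<le> u} is a
  countable union of F^i(u)-events.\<close>

lemma multi_filtration_sets_subset: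
  assumes "multi_filtration M F"
  shows "sets (F r) \<subseteq> sets M"
  using assms unfolding multi_filtration_def subalgebra_def by simp

lemma
  assumes "\<And>r. sets (F r) \<subseteq> sets M"
  shows space_coord_filtration: "space (coord_filtration M F i u) = space M"
    and sets_coord_filtration:
      "sets (coord_filtration M F i u) = sigma_sets (space M) (\<Union>r\<in>{r. r i \<le> u}. sets (F r))"
proof -
  have "(\<Union>r\<in>{r. r i \<le> u}. sets (F r)) \<subseteq> Pow (space M)"
    using assms sets.space_closed[of M] by blast
  then show "space (coord_filtration M F i u) = space M"
    and "sets (coord_filtration M F i u) = sigma_sets (space M) (\<Union>r\<in>{r. r i \<le> u}. sets (F r))"
    unfolding coord_filtration_def by (rule space_measure_of, rule sets_measure_of)
qed

lemma sets_in_coord_filtration: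
  assumes "\<And>r. sets (F r) \<subseteq> sets M" and "r i \<le> u" and "A \<in> sets (F r)"
  shows "A \<in> sets (coord_filtration M F i u)"
  using assms by (auto simp: sets_coord_filtration intro: sigma_sets.Basic)

lemma allocation_strategy_coord_Suc_le_eq:
  assumes "allocation_strategy M F s T"
  shows "{\<omega> \<in> space M. T (Suc t) \<omega> i \<le> u} =
    (\<Union>(j, r)\<in>{(j, r). r i + unit_vec j i \<le> u}.
      {\<omega> \<in> space M. T (Suc t) \<omega> = (\<lambda>k. T t \<omega> k + unit_vec j k) \<and> T t \<omega> = r})"
    (is "?lhs = ?rhs")
proof
  show "?lhs \<subseteq> ?rhs"
  proof
    fix \<omega> assume \<omega>: "\<omega> \<in> ?lhs"
    then obtain j where j: "T (Suc t) \<omega> = (\<lambda>k. T t \<omega> k + unit_vec j k)"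
      using assms unfolding allocation_strategy_def by blast
    then have "T t \<omega> i + unit_vec j i \<le> u"
      using \<omega> by (auto dest: fun_cong[where x = i])
    then show "\<omega> \<in> ?rhs"
      using \<omega> j by blast
  qed
qed auto

theorem proposition6p7:
  fixes M :: "'a measure"
    and F :: "('d::finite \<Rightarrow> nat) \<Rightarrow> 'a measure"
    and s :: "'d \<Rightarrow> nat"
    and T :: "nat \<Rightarrow> 'a \<Rightarrow> ('d \<Rightarrow> nat)"
  assumes "prob_space M"
    and "complete_measure M"
    and "multi_filtration M F"
    and "allocation_strategy M F s T"
  shows "\<forall>i t. stopping_time (coord_filtration M F i) (\<lambda>\<omega>. T t \<omega> i)"
proof (intro allI stopping_timeI)
  fix i t u
  \<comment> \<open>Only that each F(r) is a sub-sigma-algebra of M is needed.\<close>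
  have sub: "\<And>r. sets (F r) \<subseteq> sets M"
    using assms(3) by (rule multi_filtration_sets_subset)
  show "Measurable.pred (coord_filtration M F i u) (\<lambda>\<omega>. T t \<omega> i \<le> u)"
    unfolding pred_def space_coord_filtration[OF sub]
  proof (cases t)
    case 0
    then have "{\<omega> \<in> space M. T t \<omega> i \<le> u} = (if s i \<le> u then space M else {})"
      using assms(4) unfolding allocation_strategy_def by auto
    then show "{\<omega> \<in> space M. T t \<omega> i \<le> u} \<in> sets (coord_filtration M F i u)"
      using sets.top[of "coord_filtration M F i u"] by (simp add: space_coord_filtration[OF sub])
  next
    case (Suc t')
    have "{\<omega> \<in> space M. T (Suc t') \<omega> = (\<lambda>k. T t' \<omega> k + unit_vec j k) \<and> T t' \<omega> = r}
            \<in> sets (coord_filtration M F i u)" if "r i + unit_vec j i \<le> u" for j r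
      using that assms(4) unfolding allocation_strategy_def
      by (intro sets_in_coord_filtration[OF sub, of r]) auto
    then show "{\<omega> \<in> space M. T t \<omega> i \<le> u} \<in> sets (coord_filtration M F i u)"
      unfolding Suc allocation_strategy_coord_Suc_le_eq[OF assms(4)]
      by (intro sets.countable_UN') auto
  qed
qed

end
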